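(* Let $\mathbf A$ be regular of bandwidth $(p,q)$, $\sigma=d\tau-\dim\ker\mathbf A$, $L\le R$ finite with $N=R-L+1\ge\tau+2\sigma$, $\overline L=L+\sigma-1$, $\overline R=R-\sigma+1$. Define the square matrices $$K^-=\mathbf P_{L-p',\overline L-p'}\mathbf A|_{\mathcal V_{L,\overline L}},\qquad K^+=\mathbf P_{\overline R-q',R-q'}\mathbf A|_{\mathcal V_{\overline R,R}}.$$ Then $\mathcal F_L^-=\ker K^-$ and $\mathcal F_R^+=\ker K^+$.
   Context: Fix $d\ge1$. $\mathcal V^S_d$: doubly infinite sequences $\Psi=\{\psi_j\}_{j\in\mathbb Z}$, $\psi_j\in\mathbb C^d$. A matrix Laurent polynomial of bandwidth $(p,q)$ is $\sum_{r=p}^qa_rw^r$, integers $p\le q$, $a_r$ complex $d\times d$, $a_p\ne0\ne a_q$; its BBL transformation is $(\mathbf A\Psi)_j=\sum_ra_r\psi_{j+r}$; $\mathbf T$ is the left shift $(\mathbf T\Psi)_j=\psi_{j+1}$, $\mathbf T^{-1}$ the right shift. $\mathbf A$ is regular if $\det(w^{-p}A(w,w^{-1}))$ is not the zero polynomial (then $\ker\mathbf A$ is finite-dimensional). $p'=\min(p,0)$, $q'=\max(0,q)$, $\tau=q'-p'$. For $-\infty\le L\le R\le\infty$: $\mathcal V_{L,R}$ = sequences with $\psi_j=0$ for $j\notin[L,R]$; $\mathbf P_{L,R}$ = projection onto $\mathcal V_{L,R}$ zeroing entries outside $[L,R]$; bulk solution space $\mathcal M_{L,R}=\ker(\mathbf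 P_{L-p',R-q'}\mathbf A|_{\mathcal V_{L,R}})$ (infinite endpoints stay infinite). Define $\mathcal F_L^-=\{\Psi\in\mathcal M_{L,\infty}: (\mathbf P_{L,\infty}\mathbf T)^k\Psi=0\text{ for some }k\ge1\}$ and $\mathcal F_R^+=\{\Psi\in\mathcal M_{-\infty,R}: (\mathbf P_{-\infty,R}\mathbf T^{-1})^k\Psi=0\text{ for some }k\ge1\}$. $K^\pm$ are viewed as linear maps $\mathcal V_{L,\overline L}\to\mathcal V_{L-p',\overline L-p'}$ and $\mathcal V_{\overline R,R}\to\mathcal V_{\overline R-q',R-q'}$ (both spaces of dimension $d\sigma$). *)

theory Defs
  imports "HOL-Analysis.Analysis" "HOL-Computational_Algebra.Polynomial" "HOL-Library.Function_Algebras"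
begin

text \<open>Sequences in \<open>V^S_d\<close> are functions \<open>int \<Rightarrow> complex^'d\<close>, with \<open>d = CARD('d)\<close>.
  A matrix Laurent polynomial of bandwidth (p,q) is given by its coefficient function
  \<open>a :: int \<Rightarrow> complex^'d^'d\<close> together with p q; only \<open>a p, ..., a q\<close> are used.\<close>

definition bbl :: "(int \<Rightarrow> complex^'d^'d) \<Rightarrow> int \<Rightarrow> int \<Rightarrow> (int \<Rightarrow> complex^'d) \<Rightarrow> (int \<Rightarrow> complex^'d)" where
  "bbl a p q \<Psi> = (\<lambda>j. \<Sum>r\<in>{p..q}. a r *v \<Psi> (j + r))"

definition is_bandwidth :: "(int \<Rightarrow> complex^'d^'d) \<Rightarrow> int \<Rightarrow> int \<Rightarrow> bool" where
  "is_bandwidth a p q \<longleftrightarrow> p \<le> q \<and> a p \<noteq> 0 \<and> a q \<noteq> 0"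

text \<open>The matrix polynomial \<open>w^{-p} A(w,w^{-1}) = \<Sum>_r a_r w^{r-p}\<close>.\<close>
definition symbol_poly :: "(int \<Rightarrow> complex^'d^'d) \<Rightarrow> int \<Rightarrow> int \<Rightarrow> complex poly^'d^'d" where
  "symbol_poly a p q = (\<chi> i k. \<Sum>r\<in>{p..q}. monom (a r $ i $ k) (nat (r - p)))"

definition regular :: "(int \<Rightarrow> complex^'d^'d) \<Rightarrow> int \<Rightarrow> int \<Rightarrow> bool" where
  "regular a p q \<longleftrightarrow> det (symbol_poly a p q) \<noteq> 0"

definition seq_scale :: "complex \<Rightarrow> (int \<Rightarrow> complex^'d) \<Rightarrow> (int \<Rightarrow> complex^'d)" where
  "seq_scale c \<Psi> = (\<lambda>j. c *s \<Psi> j)"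

definition bbl_kernel :: "(int \<Rightarrow> complex^'d^'d) \<Rightarrow> int \<Rightarrow> int \<Rightarrow> (int \<Rightarrow> complex^'d) set" where
  "bbl_kernel a p q = {\<Psi>. bbl a p q \<Psi> = (\<lambda>j. 0)}"

definition dim_ker :: "(int \<Rightarrow> complex^'d^'d) \<Rightarrow> int \<Rightarrow> int \<Rightarrow> nat" where
  "dim_ker a p q = vector_space.dim seq_scale (bbl_kernel a p q)"

definition p' :: "int \<Rightarrow> int" where "p' p = min p 0"
definition q' :: "int \<Rightarrow> int" where "q' q = max 0 q"
definition tau :: "int \<Rightarrow> int \<Rightarrow> int" where "tau p q = q' q - p' p"

definition sigma :: "(int \<Rightarrow> complex^'d^'d) \<Rightarrow> int \<Rightarrow> int \<Rightarrow> int" where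
  "sigma a p q = int CARD('d) * tau p q - int (dim_ker a p q)"

definition supp_in :: "int set \<Rightarrow> (int \<Rightarrow> complex^'d) \<Rightarrow> bool" where
  "supp_in S \<Psi> \<longleftrightarrow> (\<forall>j. j \<notin> S \<longrightarrow> \<Psi> j = 0)"

definition bulk_right_inf :: "(int \<Rightarrow> complex^'d^'d) \<Rightarrow> int \<Rightarrow> int \<Rightarrow> int \<Rightarrow> (int \<Rightarrow> complex^'d) set" where
  "bulk_right_inf a p q L = {\<Psi>. supp_in {L..} \<Psi> \<and> (\<forall>j\<ge>L - p' p. bbl a p q \<Psi> j = 0)}"

definition bulk_left_inf :: "(int \<Rightarrow> complex^'d^'d) \<Rightarrow> int \<Rightarrow> int \<Rightarrow> int \<Rightarrow> (int \<Rightarrow> complex^'d) set" where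
  "bulk_left_inf a p q R = {\<Psi>. supp_in {..R} \<Psi> \<and> (\<forall>j\<le>R - q' q. bbl a p q \<Psi> j = 0)}"

definition PT_left :: "int \<Rightarrow> (int \<Rightarrow> complex^'d) \<Rightarrow> (int \<Rightarrow> complex^'d)" where
  "PT_left L \<Psi> = (\<lambda>j. if L \<le> j then \<Psi> (j + 1) else 0)"

definition PTinv_right :: "int \<Rightarrow> (int \<Rightarrow> complex^'d) \<Rightarrow> (int \<Rightarrow> complex^'d)" where
  "PTinv_right R \<Psi> = (\<lambda>j. if j \<le> R then \<Psi> (j - 1) else 0)"

definition F_minus :: "(int \<Rightarrow> complex^'d^'d) \<Rightarrow> int \<Rightarrow> int \<Rightarrow> int \<Rightarrow> (int \<Rightarrow> complex^'d) set" where
  "F_minus a p q L = {\<Psi>\<in>bulk_right_inf a p q L. \<exists>k\<ge>1. (PT_left L ^^ k) \<Psi> = (\<lambda>j. 0)}"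

definition F_plus :: "(int \<Rightarrow> complex^'d^'d) \<Rightarrow> int \<Rightarrow> int \<Rightarrow> int \<Rightarrow> (int \<Rightarrow> complex^'d) set" where
  "F_plus a p q R = {\<Psi>\<in>bulk_left_inf a p q R. \<exists>k\<ge>1. (PTinv_right R ^^ k) \<Psi> = (\<lambda>j. 0)}"

text \<open>Kernel of \<open>P_{L',R'} A\<close> restricted to \<open>V_{L0,R0}\<close> (as a subset of \<open>V^S_d\<close>).\<close>
definition ker_restr :: "(int \<Rightarrow> complex^'d^'d) \<Rightarrow> int \<Rightarrow> int \<Rightarrow> int \<Rightarrow> int \<Rightarrow> int \<Rightarrow> int \<Rightarrow> (int \<Rightarrow> complex^'d) set" where
  "ker_restr a p q L0 R0 L' R' = {\<Psi>. supp_in {L0..R0} \<Psi> \<and> (\<forall>j\<in>{L'..R'}. bbl a p q \<Psi> j = 0)}"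

end

theory Submission
  imports Defs
begin

text \<open>The BBL transformation is \<open>S(T)\<close> shifted by \<open>p\<close>, where \<open>T\<close> is the left shift and
  \<open>S(w) = w^(-p) A(w, 1/w)\<close> is the matrix polynomial of the symbol. Regularity, \<open>det S \<noteq> 0\<close>,
  has two consequences through the adjugate: an element of \<open>ker A\<close> vanishing on
  \<open>deg (det S) + 1\<close> consecutive sites is zero, and every truncation of \<open>A\<close> from
  \<open>V(L0, R0)\<close> to \<open>V(L0 - p', R0 - q')\<close> is onto. Counting dimensions, the finite bulk space
  \<open>M(L0, R0)\<close> then has dimension at most \<open>d \<tau>\<close>, and restriction to \<open>[L0, R0]\<close> embeds
  \<open>ker A\<close> into it independently of any bulk solutions that vanish on a long enough window.
  If \<open>\<Phi> \<in> F\<^sup>-\<^sub>L\<close> has its last nonzero entry at \<open>m\<close>, the truncated shifts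
  \<open>(P T)^k \<Phi>\<close>, \<open>k \<le> m - L\<close>, are triangular, hence independent, bulk solutions of this kind,
  so \<open>m - L + 1 + dim ker A \<le> d \<tau>\<close>, i.e. \<open>m < L + \<sigma>\<close>. Thus \<open>\<Phi> \<in> ker K\<^sup>-\<close>; the converse
  inclusion is immediate, and \<open>F\<^sup>+\<^sub>R\<close> is the mirror image.\<close>

lemma sum_apply: "(\<Sum>i\<in>S. f i) x = (\<Sum>i\<in>S. f i x)"
  by (induction S rule: infinite_finite_induct) auto

lemma (in vector_space) independent_Un_span_disjoint:
  assumes iB: "independent B" and iC: "independent C"
    and disj: "\<And>x. x \<in> span B \<Longrightarrow> x \<in> span C \<Longrightarrow> x = 0"
  shows "independent (B \<union> C)"
  unfolding independent_explicit_finite_subsets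
proof (intro allI impI ballI)
  fix S u v
  assume S: "S \<subseteq> B \<union> C" and fS: "finite S" and s0: "(\<Sum>v\<in>S. scale (u v) v) = 0" and v: "v \<in> S"
  define x1 where "x1 = (\<Sum>v\<in>S \<inter> B. scale (u v) v)"
  define x2 where "x2 = (\<Sum>v\<in>S - B. scale (u v) v)"
  have "x1 + x2 = 0"
    using s0 fS unfolding x1_def x2_def by (metis Int_Diff_Un Int_Diff_disjoint finite_Int finite_Diff sum.union_disjoint)
  then have x12: "x1 = - x2" by (simp add: eq_neg_iff_add_eq_0)
  have "x1 \<in> span B" unfolding x1_def by (intro span_sum span_scale span_base) auto
  moreover have "x2 \<in> span C" unfolding x2_def by (intro span_sum span_scale span_base) (use S in auto)
  then have "x1 \<in> span C" unfolding x12 by (rule span_neg)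
  ultimately have "x1 = 0" by (rule disj)
  then have "x2 = 0" using x12 by simp
  show "u v = 0"
  proof (cases "v \<in> B")
    case True
    then show ?thesis using iB \<open>x1 = 0\<close> fS v
      unfolding independent_explicit_finite_subsets x1_def by blast
  next
    case False
    moreover have "S - B \<subseteq> C" using S by auto
    ultimately show ?thesis using iC \<open>x2 = 0\<close> fS v
      unfolding independent_explicit_finite_subsets x2_def by blast
  qed
qed

lemma (in vector_space) exists_linear_functional_separating:
  assumes W: "subspace W" and x: "x \<notin> W"
  obtains f :: "'b \<Rightarrow> 'a" where "Vector_Spaces.linear scale (*) f" "f x = 1" "\<forall>w\<in>W. f w = 0"
proof -
  interpret dual: vector_space_pair scale "(*) :: 'a \<Rightarrow> 'a \<Rightarrow> 'a"
    by unfold_locales (simp_all add: algebra_simps)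
  obtain B where B: "B \<subseteq> W" "independent B" "W \<subseteq> span B"
    using basis_exists[of W] by metis
  have xB: "x \<notin> span B" using x span_minimal[OF B(1) W] by auto
  have ind: "independent (insert x B)" by (rule independent_insertI[OF xB B(2)])
  define f where "f = dual.construct (insert x B) (\<lambda>b. if b = x then 1 else 0)"
  have lin: "Vector_Spaces.linear scale (*) f"
    unfolding f_def by (rule dual.linear_construct[OF ind])
  moreover have "f x = 1" unfolding f_def by (subst dual.construct_basis[OF ind]) auto
  moreover have "f b = 0" if "b \<in> B" for b
    using that xB span_base unfolding f_def by (subst dual.construct_basis[OF ind]) auto
  then have "\<forall>w\<in>W. f w = 0"
    using dual.linear_eq_0_on_span[OF lin] B(3) by blast
  ultimately show ?thesis by (rule that)
qed

lemma finite_support_last_nonzero: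
  fixes \<Phi> :: "int \<Rightarrow> 'a::zero"
  assumes fin: "finite {t. \<Phi> t \<noteq> 0}" and nz: "\<Phi> j \<noteq> 0"
  obtains m where "j \<le> m" "\<Phi> m \<noteq> 0" "\<forall>t>m. \<Phi> t = 0"
proof
  let ?m = "Max {t. \<Phi> t \<noteq> 0}"
  show "j \<le> ?m" "\<Phi> ?m \<noteq> 0" using fin nz Max_in[OF fin] by auto
  show "\<forall>t>?m. \<Phi> t = 0" using Max_ge[OF fin] by force
qed

lemma finite_support_first_nonzero:
  fixes \<Phi> :: "int \<Rightarrow> 'a::zero"
  assumes fin: "finite {t. \<Phi> t \<noteq> 0}" and nz: "\<Phi> j \<noteq> 0"
  obtains m where "m \<le> j" "\<Phi> m \<noteq> 0" "\<forall>t<m. \<Phi> t = 0"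
proof
  let ?m = "Min {t. \<Phi> t \<noteq> 0}"
  show "?m \<le> j" "\<Phi> ?m \<noteq> 0" using fin nz Min_in[OF fin] by auto
  show "\<forall>t<?m. \<Phi> t = 0" using Min_le[OF fin] by force
qed

definition adjugate :: "'a::comm_ring_1^'n^'n \<Rightarrow> 'a^'n^'n" where
  "adjugate M = (\<chi> j k. det (\<chi> i. if i = k then axis j 1 else row i M))"

lemma matrix_mul_adjugate: "M ** adjugate M = mat (det M)"
proof -
  have "(M ** adjugate M) $ i0 $ k = mat (det M) $ i0 $ k" for i0 k
  proof -
    have "(M ** adjugate M) $ i0 $ k = (\<Sum>j\<in>UNIV. det (\<chi> i. if i = k then M$i0$j *s axis j 1 else row i M))"
      by (simp add: matrix_matrix_mult_def adjugate_def det_row_mul)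
    also have "\<dots> = det (\<chi> i. if i = k then (\<Sum>j\<in>UNIV. M$i0$j *s axis j 1) else row i M)"
      by (rule det_linear_row_sum[symmetric]) simp
    also have "(\<Sum>j\<in>UNIV. M$i0$j *s axis j 1) = row i0 M"
      by (simp add: vec_eq_iff row_def axis_def sum_component if_distrib cong: if_cong)
    also have "det (\<chi> i. if i = k then row i0 M else row i M) = mat (det M) $ i0 $ k"
    proof (cases "i0 = k")
      case True
      then have "(\<chi> i. if i = k then row i0 M else row i M) = M"
        by (simp add: vec_eq_iff row_def)
      then show ?thesis using True by (simp add: mat_def)
    next
      case False
      then have "det (\<chi> i. if i = k then row i0 M else row i M) = 0"
        by (intro det_identical_rows[OF False]) (simp add: row_def vec_eq_iff)
      then show ?thesis using False by (simp add: mat_def)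
    qed
    finally show ?thesis .
  qed
  then show ?thesis by (simp add: vec_eq_iff)
qed

lemma transpose_adjugate_transpose_mul: "transpose (adjugate (transpose M)) ** M = mat (det M)"
  using arg_cong[OF matrix_mul_adjugate[of "transpose M"], of transpose]
  by (simp add: matrix_transpose_mul transpose_mat)

section \<open>Matrix polynomials in the shift\<close>

definition shift_action :: "'a::comm_semiring_1 poly \<Rightarrow> (int \<Rightarrow> 'a) \<Rightarrow> int \<Rightarrow> 'a" where
  "shift_action c z = (\<lambda>t. \<Sum>s\<le>degree c. coeff c s * z (t + int s))"

lemma shift_action_eq_sum_atMost:
  assumes "degree c \<le> n"
  shows "shift_action c z t = (\<Sum>s\<le>n. coeff c s * z (t + int s))"
  unfolding shift_action_def
  by (rule sum.mono_neutral_left) (use assms in \<open>auto simp: coeff_eq_0\<close>)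

lemma shift_action_0 [simp]: "shift_action 0 z = (\<lambda>t. 0)"
  by (simp add: shift_action_def)

lemma shift_action_zero_seq [simp]: "shift_action c (\<lambda>u. 0) = (\<lambda>t. 0)"
  by (simp add: shift_action_def)

lemma shift_action_pCons: "shift_action (pCons a c) z t = a * z t + shift_action c z (t + 1)"
proof -
  have "shift_action (pCons a c) z t = (\<Sum>s\<le>Suc (degree c). coeff (pCons a c) s * z (t + int s))"
    by (rule shift_action_eq_sum_atMost) (rule degree_pCons_le)
  also have "\<dots> = a * z t + (\<Sum>s\<le>degree c. coeff c s * z (t + 1 + int s))"
    by (subst sum.atMost_Suc_shift) (simp add: add_ac)
  finally show ?thesis by (simp add: shift_action_def)
qed

lemma shift_action_add: "shift_action (c + e) z t = shift_action c z t + shift_action e z t"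
proof -
  let ?n = "max (degree c) (degree e)"
  have "shift_action (c + e) z t = (\<Sum>s\<le>?n. coeff (c + e) s * z (t + int s))"
    by (rule shift_action_eq_sum_atMost) (rule degree_add_le; simp)
  then show ?thesis
    using shift_action_eq_sum_atMost[of c ?n z t] shift_action_eq_sum_atMost[of e ?n z t]
    by (simp add: sum.distrib distrib_right)
qed

lemma shift_action_smult: "shift_action (smult a c) z t = a * shift_action c z t"
proof -
  have "shift_action (smult a c) z t = (\<Sum>s\<le>degree c. coeff (smult a c) s * z (t + int s))"
    by (rule shift_action_eq_sum_atMost) (rule degree_smult_le)
  then show ?thesis by (simp add: shift_action_def sum_distrib_left mult.assoc)
qed

lemma shift_action_monom: "shift_action (monom a n) z t = a * z (t + int n)"
proof -
  have "shift_action (monom a n) z t = (\<Sum>s\<le>n. coeff (monom a n) s * z (t + int s))"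
    by (rule shift_action_eq_sum_atMost) (simp add: degree_monom_le)
  also have "\<dots> = (\<Sum>s\<le>n. if s = n then a * z (t + int n) else 0)"
    by (intro sum.cong refl) (auto simp: coeff_monom)
  finally show ?thesis by simp
qed

lemma shift_action_sum: "shift_action (\<Sum>l\<in>S. f l) z t = (\<Sum>l\<in>S. shift_action (f l) z t)"
  by (induction S rule: infinite_finite_induct) (auto simp: shift_action_add)

lemma shift_action_sum_seq: "shift_action c (\<lambda>u. \<Sum>k\<in>K. f k u) t = (\<Sum>k\<in>K. shift_action c (f k) t)"
  unfolding shift_action_def by (simp add: sum_distrib_left sum.swap[of _ K])

lemma shift_action_mult: "shift_action (c * e) z = shift_action c (shift_action e z)"
proof (induction c rule: pCons_induct)
  case (pCons a c)
  have "shift_action (pCons a c * e) z t = shift_action (pCons a c) (shift_action e z) t" for t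
  proof -
    have "shift_action (pCons a c * e) z t = a * shift_action e z t + shift_action (c * e) z (t + 1)"
      by (simp add: shift_action_add shift_action_smult shift_action_pCons)
    then show ?thesis by (simp add: pCons.IH shift_action_pCons)
  qed
  then show ?case by auto
qed simp

definition mat_shift_action ::
    "'a::comm_semiring_1 poly^'n^'m \<Rightarrow> (int \<Rightarrow> 'a^'n) \<Rightarrow> int \<Rightarrow> 'a^'m"
  where
  "mat_shift_action M X = (\<lambda>t. \<chi> i. \<Sum>k\<in>UNIV. shift_action (M$i$k) (\<lambda>u. X u $ k) t)"

lemma mat_shift_action_mult: "mat_shift_action (M ** N) X = mat_shift_action M (mat_shift_action N X)"
proof -
  have "mat_shift_action (M ** N) X t $ i = mat_shift_action M (mat_shift_action N X) t $ i" for t i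
  proof -
    have "mat_shift_action (M ** N) X t $ i
        = (\<Sum>k\<in>UNIV. \<Sum>l\<in>UNIV. shift_action (M$i$l) (shift_action (N$l$k) (\<lambda>u. X u $ k)) t)"
      by (simp add: mat_shift_action_def matrix_matrix_mult_def shift_action_sum shift_action_mult)
    also have "\<dots> = (\<Sum>l\<in>UNIV. \<Sum>k\<in>UNIV. shift_action (M$i$l) (shift_action (N$l$k) (\<lambda>u. X u $ k)) t)"
      by (rule sum.swap)
    finally show ?thesis by (simp add: mat_shift_action_def shift_action_sum_seq)
  qed
  then show ?thesis by (simp add: fun_eq_iff vec_eq_iff)
qed

lemma mat_shift_action_mat: "mat_shift_action (mat c) X t = (\<chi> i. shift_action c (\<lambda>u. X u $ i) t)"
  by (simp add: mat_shift_action_def mat_def vec_eq_iff if_distrib[of "\<lambda>c. shift_action c _ t"] cong: if_cong)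

lemma mat_shift_action_zero_seq [simp]: "mat_shift_action M (\<lambda>u. 0) = (\<lambda>t. 0)"
  by (simp add: mat_shift_action_def fun_eq_iff vec_eq_iff)

lemma bbl_eq_mat_shift_action: "bbl a p q \<Psi> j = mat_shift_action (symbol_poly a p q) \<Psi> (j + p)"
proof -
  have "mat_shift_action (symbol_poly a p q) \<Psi> (j + p) $ i = bbl a p q \<Psi> j $ i" for i
  proof -
    have "mat_shift_action (symbol_poly a p q) \<Psi> (j + p) $ i
        = (\<Sum>k\<in>UNIV. \<Sum>r\<in>{p..q}. a r $ i $ k * \<Psi> (j + p + int (nat (r - p))) $ k)"
      by (simp add: mat_shift_action_def symbol_poly_def shift_action_sum shift_action_monom)
    also have "\<dots> = (\<Sum>k\<in>UNIV. \<Sum>r\<in>{p..q}. a r $ i $ k * \<Psi> (j + r) $ k)"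
      by (intro sum.cong refl) auto
    finally show ?thesis
      by (simp add: bbl_def matrix_vector_mult_def sum.swap[of _ UNIV])
  qed
  then show ?thesis by (simp add: vec_eq_iff)
qed

section \<open>Consequences of regularity\<close>

lemma shift_action_vanishing_window_extend_right:
  fixes z :: "int \<Rightarrow> 'a::idom"
  assumes c: "c \<noteq> 0" and z: "shift_action c z = (\<lambda>t. 0)"
    and win: "\<forall>t\<in>{m..m + int (degree c)}. z t = 0"
  shows "\<forall>t\<in>{m..m + int (degree c) + int k}. z t = 0"
proof (induction k)
  case (Suc k)
  define D where "D = degree c"
  define t where "t = m + int D + int k + 1"
  have "shift_action c z (t - int D) = (\<Sum>s\<le>D. if s = D then coeff c D * z t else 0)"
    unfolding shift_action_def D_def[symmetric]
  proof (intro sum.cong refl)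
    fix s assume s: "s \<in> {..D}"
    show "coeff c s * z (t - int D + int s) = (if s = D then coeff c D * z t else 0)"
    proof (cases "s = D")
      case False
      then have "z (t - int D + int s) = 0" using Suc.IH s unfolding t_def D_def by auto
      then show ?thesis using False by simp
    qed simp
  qed
  then have "coeff c D * z t = 0" using z by (simp add: fun_eq_iff)
  then have "z t = 0" using c unfolding D_def by simp
  moreover have "{m..m + int (degree c) + int (Suc k)} = insert t {m..m + int (degree c) + int k}"
    unfolding t_def D_def by auto
  ultimately show ?case using Suc.IH by auto
qed (use win in simp)

lemma shift_action_vanishing_right_extend_left:
  fixes z :: "int \<Rightarrow> 'a::idom"
  assumes c: "c \<noteq> 0" and z: "shift_action c z = (\<lambda>t. 0)"
    and right: "\<forall>t\<ge>m. z t = 0"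
  shows "\<forall>t\<ge>m - int k. z t = 0"
proof (induction k)
  case (Suc k)
  define r where "r = (LEAST s. coeff c s \<noteq> 0)"
  have cr: "coeff c r \<noteq> 0"
    unfolding r_def by (rule LeastI[of _ "degree c"]) (use c in simp)
  have below_r: "coeff c s = 0" if "s < r" for s
    using that not_less_Least unfolding r_def by blast
  define t where "t = m - int k - 1"
  have "shift_action c z (t - int r) = (\<Sum>s\<le>degree c. if s = r then coeff c r * z t else 0)"
    unfolding shift_action_def
  proof (intro sum.cong refl)
    fix s
    show "coeff c s * z (t - int r + int s) = (if s = r then coeff c r * z t else 0)"
    proof (cases s r rule: linorder_cases)
      case greater
      then have "z (t - int r + int s) = 0" using Suc.IH unfolding t_def by auto
      then show ?thesis using greater by simp
    qed (auto simp: below_r)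
  qed
  moreover have "r \<le> degree c"
    unfolding r_def by (rule Least_le) (use c in simp)
  ultimately have "coeff c r * z t = 0" using z by (simp add: fun_eq_iff)
  then have "z t = 0" using cr by simp
  moreover have "u \<ge> m - int k \<or> u = t" if "u \<ge> m - int (Suc k)" for u
    using that unfolding t_def by auto
  ultimately show ?case using Suc.IH by auto
qed (use right in simp)

lemma shift_action_vanishing_window_imp_zero:
  fixes z :: "int \<Rightarrow> 'a::idom"
  assumes c: "c \<noteq> 0" and z: "shift_action c z = (\<lambda>t. 0)"
    and win: "\<forall>t\<in>{m..m + int (degree c)}. z t = 0"
  shows "z = (\<lambda>t. 0)"
proof
  fix t
  have "\<forall>t\<ge>m. z t = 0"
  proof (intro allI impI)
    fix t assume "t \<ge> m"
    then have "t \<in> {m..m + int (degree c) + int (nat (t - m))}" by auto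
    then show "z t = 0" using shift_action_vanishing_window_extend_right[OF c z win] by blast
  qed
  moreover have "t \<ge> m - int (nat (m - t))" by auto
  ultimately show "z t = 0" using shift_action_vanishing_right_extend_left[OF c z] by blast
qed

lemma bbl_kernel_vanishing_window_imp_zero:
  assumes reg: "regular a p q" and ker: "bbl a p q x = (\<lambda>j. 0)"
    and win: "\<forall>t\<in>{m..m + int (degree (det (symbol_poly a p q)))}. x t = 0"
  shows "x = (\<lambda>t. 0)"
proof -
  let ?S = "symbol_poly a p q"
  have "mat_shift_action ?S x t = 0" for t
    using fun_cong[OF ker, of "t - p"] by (simp add: bbl_eq_mat_shift_action)
  then have "mat_shift_action ?S x = (\<lambda>t. 0)" by auto
  then have "mat_shift_action (transpose (adjugate (transpose ?S)) ** ?S) x = (\<lambda>t. 0)"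
    by (simp only: mat_shift_action_mult mat_shift_action_zero_seq)
  then have "mat_shift_action (mat (det ?S)) x t $ i = 0" for t i
    by (metis transpose_adjugate_transpose_mul zero_index)
  then have comp: "shift_action (det ?S) (\<lambda>u. x u $ i) = (\<lambda>t. 0)" for i
    by (metis mat_shift_action_mat vec_lambda_beta)
  have "det ?S \<noteq> 0" using reg by (simp add: regular_def)
  then have "(\<lambda>u. x u $ i) = (\<lambda>t. 0)" for i
    using shift_action_vanishing_window_imp_zero[OF _ comp, of m] win by auto
  then show ?thesis by (auto simp: fun_eq_iff vec_eq_iff dest: fun_cong)
qed

text \<open>Testing against \<open>x = adj S(T) \<delta>\<close>, with \<open>\<delta>\<close> a unit vector at \<open>M + p + deg det S\<close> for
  the last site \<open>M\<close> where \<open>\<xi>\<close> is nonzero, isolates \<open>\<xi>\<^sub>M\<close> times the leading coefficient of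
  \<open>det S\<close>.\<close>
lemma bbl_annihilator_eq_0:
  assumes reg: "regular a p q" and supp: "supp_in {lo..hi} \<xi>"
    and annih: "\<forall>x. (\<Sum>j\<in>{lo..hi}. \<Sum>i\<in>UNIV. \<xi> j $ i * bbl a p q x j $ i) = 0"
  shows "\<xi> = (\<lambda>j. 0)"
proof (rule ccontr)
  let ?S = "symbol_poly a p q"
  let ?c = "det ?S"
  define D where "D = degree ?c"
  define Sx where "Sx = {j\<in>{lo..hi}. \<xi> j \<noteq> 0}"
  assume "\<xi> \<noteq> (\<lambda>j. 0)"
  then have "Sx \<noteq> {}" using supp by (auto simp: Sx_def supp_in_def)
  moreover have fin: "finite Sx" unfolding Sx_def by (rule finite_subset[of _ "{lo..hi}"]) auto
  ultimately have MS: "Max Sx \<in> Sx" by (rule Max_in[rotated])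
  define M where "M = Max Sx"
  have above_M: "\<xi> j = 0" if "j \<in> {lo..hi}" "j > M" for j
    using Max_ge[OF fin, of j] that unfolding M_def Sx_def by force
  from MS obtain i0 where i0: "\<xi> M $ i0 \<noteq> 0" unfolding Sx_def M_def by (auto simp: vec_eq_iff)
  define n where "n = M + p + int D"
  define y where "y = (\<lambda>t. if t = n then axis i0 (1::complex) else 0)"
  define x where "x = mat_shift_action (adjugate ?S) y"
  have bbl_x: "bbl a p q x j $ i = (if i = i0 then shift_action ?c (\<lambda>u. if u = n then 1 else 0) (j + p) else 0)"
    for j i
    by (simp add: bbl_eq_mat_shift_action x_def mat_shift_action_mult[symmetric] matrix_mul_adjugate
        mat_shift_action_mat y_def axis_def if_distrib[of "\<lambda>v. v $ i"] cong: if_cong)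
  have summand: "(\<Sum>i\<in>UNIV. \<xi> j $ i * bbl a p q x j $ i) = (if j = M then \<xi> M $ i0 * coeff ?c D else 0)"
    if j: "j \<in> {lo..hi}" for j
  proof (cases "j > M")
    case True
    then show ?thesis using above_M[OF j] by simp
  next
    case False
    then have "shift_action ?c (\<lambda>u. if u = n then 1 else 0) (j + p)
        = (\<Sum>s\<le>D. if j = M \<and> s = D then coeff ?c D else 0)"
      unfolding shift_action_def D_def[symmetric] by (intro sum.cong refl) (auto simp: n_def)
    then show ?thesis by (simp add: bbl_x if_distrib cong: if_cong)
  qed
  have "(\<Sum>j\<in>{lo..hi}. \<Sum>i\<in>UNIV. \<xi> j $ i * bbl a p q x j $ i) = \<xi> M $ i0 * coeff ?c D"
    using MS by (simp add: summand M_def Sx_def)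
  then have "\<xi> M $ i0 * coeff ?c D = 0" using annih by simp
  moreover have "coeff ?c D \<noteq> 0" using reg unfolding D_def regular_def by simp
  ultimately show False using i0 by simp
qed

section \<open>Finite bulk spaces\<close>

interpretation seq: vector_space "seq_scale :: complex \<Rightarrow> (int \<Rightarrow> complex^'d) \<Rightarrow> _"
  by unfold_locales (auto simp: seq_scale_def fun_eq_iff vec_eq_iff algebra_simps)

interpretation seq_dual: vector_space_pair
  "seq_scale :: complex \<Rightarrow> (int \<Rightarrow> complex^'d) \<Rightarrow> _" "(*) :: complex \<Rightarrow> complex \<Rightarrow> complex"
  ..

lemma seq_scale_apply [simp]: "seq_scale c x t = c *s x t"
  by (simp add: seq_scale_def)

lemma subspace_supp_in: "seq.subspace {x. supp_in S x}"
  by (auto simp: seq.subspace_def supp_in_def)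

lemma bbl_add: "bbl a p q (x + y) j = bbl a p q x j + bbl a p q y j"
  by (simp add: bbl_def matrix_vector_right_distrib sum.distrib)

lemma bbl_seq_scale: "bbl a p q (seq_scale c x) j = c *s bbl a p q x j"
  by (simp add: bbl_def vec_eq_iff matrix_vector_mult_def sum_distrib_left mult.left_commute)

lemma bbl_zero_seq: "bbl a p q 0 = 0"
  by (simp add: bbl_def fun_eq_iff)

lemma subspace_bbl_kernel: "seq.subspace (bbl_kernel a p q)"
  by (auto simp: seq.subspace_def bbl_kernel_def fun_eq_iff bbl_add bbl_seq_scale bbl_zero_seq)

definition unit_seq :: "int \<Rightarrow> 'd \<Rightarrow> int \<Rightarrow> complex^'d" where
  "unit_seq j k = (\<lambda>t. if t = j then axis k 1 else 0)"

definition unit_seqs :: "int \<Rightarrow> int \<Rightarrow> (int \<Rightarrow> complex^'d) set" where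
  "unit_seqs lo hi = case_prod unit_seq ` ({lo..hi} \<times> UNIV)"

lemma inj_unit_seq: "inj (case_prod unit_seq)"
proof (rule injI, clarify)
  fix j k j' k'
  assume e: "unit_seq j k = unit_seq j' k'"
  then have "unit_seq j k j $ k = unit_seq j' k' j $ k" by simp
  then have "j = j'" by (auto simp: unit_seq_def axis_def split: if_splits)
  moreover from e have "unit_seq j k j $ k' = unit_seq j' k' j $ k'" by simp
  ultimately show "j = j' \<and> k = k'" by (auto simp: unit_seq_def axis_def split: if_splits)
qed

lemma finite_unit_seqs [simp]: "finite (unit_seqs lo hi)"
  by (simp add: unit_seqs_def)

lemma card_unit_seqs: "card (unit_seqs lo hi :: (int \<Rightarrow> complex^'d) set) = nat (hi - lo + 1) * CARD('d)"
  unfolding unit_seqs_def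
  by (subst card_image[OF inj_on_subset[OF inj_unit_seq]]) (simp_all add: card_cartesian_product)

lemma supp_in_unit_seqs: "y \<in> unit_seqs lo hi \<Longrightarrow> supp_in {lo..hi} y"
  by (auto simp: unit_seqs_def unit_seq_def supp_in_def)

lemma supp_in_eq_sum_unit_seq:
  assumes "supp_in {lo..hi} x"
  shows "x = (\<Sum>j\<in>{lo..hi}. \<Sum>k\<in>UNIV. seq_scale (x j $ k) (unit_seq j k))"
proof
  fix t
  show "x t = (\<Sum>j\<in>{lo..hi}. \<Sum>k\<in>UNIV. seq_scale (x j $ k) (unit_seq j k)) t"
  proof (cases "t \<in> {lo..hi}")
    case True
    have "(\<Sum>j\<in>{lo..hi}. \<Sum>k\<in>UNIV. seq_scale (x j $ k) (unit_seq j k)) t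
        = (\<Sum>j\<in>{lo..hi}. if j = t then (\<Sum>k\<in>UNIV. x t $ k *s axis k 1) else 0)"
      unfolding sum_apply by (intro sum.cong refl) (auto simp: unit_seq_def)
    also have "\<dots> = x t" using True by (simp add: basis_expansion)
    finally show ?thesis by simp
  next
    case False
    then have "(\<Sum>j\<in>{lo..hi}. \<Sum>k\<in>UNIV. seq_scale (x j $ k) (unit_seq j k)) t = 0"
      unfolding sum_apply by (intro sum.neutral ballI) (auto simp: unit_seq_def)
    then show ?thesis using assms False by (simp add: supp_in_def)
  qed
qed

lemma supp_in_imp_in_span_unit_seqs:
  assumes "supp_in {lo..hi} x"
  shows "x \<in> seq.span (unit_seqs lo hi)"
proof -
  have "(\<Sum>j\<in>{lo..hi}. \<Sum>k\<in>UNIV. seq_scale (x j $ k) (unit_seq j k)) \<in> seq.span (unit_seqs lo hi)"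
    by (intro seq.span_sum seq.span_scale seq.span_base) (auto simp: unit_seqs_def)
  then show ?thesis using supp_in_eq_sum_unit_seq[OF assms] by simp
qed

lemma independent_unit_seqs: "seq.independent (unit_seqs lo hi :: (int \<Rightarrow> complex^'d) set)"
proof (rule seq.independent_if_scalars_zero[OF finite_unit_seqs])
  fix f :: "(int \<Rightarrow> complex^'d) \<Rightarrow> complex" and x :: "int \<Rightarrow> complex^'d"
  assume s: "(\<Sum>x\<in>unit_seqs lo hi. seq_scale (f x) x) = 0" and x: "x \<in> unit_seqs lo hi"
  then obtain j0 k0 where x0: "x = unit_seq j0 k0" "j0 \<in> {lo..hi}" by (auto simp: unit_seqs_def)
  have "0 = (\<Sum>x\<in>unit_seqs lo hi. seq_scale (f x) x) j0 $ k0" using s by simp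
  also have "\<dots> = (\<Sum>(j,k)\<in>{lo..hi} \<times> (UNIV :: 'd set). f (unit_seq j k) * (unit_seq j k j0 $ k0))"
    unfolding unit_seqs_def
    by (subst sum.reindex[OF inj_on_subset[OF inj_unit_seq]])
      (simp_all add: sum_apply sum_component case_prod_unfold)
  also have "\<dots> = (\<Sum>y\<in>{lo..hi} \<times> (UNIV :: 'd set). if y = (j0,k0) then f (unit_seq j0 k0) else 0)"
    by (intro sum.cong refl) (auto simp: unit_seq_def axis_def split: if_splits)
  also have "\<dots> = f x" using x0 by simp
  finally show "f x = 0" by simp
qed

definition bbl_window ::
    "(int \<Rightarrow> complex^'d^'d) \<Rightarrow> int \<Rightarrow> int \<Rightarrow> int \<Rightarrow> int \<Rightarrow> (int \<Rightarrow> complex^'d) \<Rightarrow> int \<Rightarrow> complex^'d"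
  where
  "bbl_window a p q lo hi x = (\<lambda>j. if j \<in> {lo..hi} then bbl a p q x j else 0)"

lemma linear_bbl_window: "Vector_Spaces.linear seq_scale seq_scale (bbl_window a p q lo hi)"
  by unfold_locales (auto simp: bbl_window_def fun_eq_iff bbl_add bbl_seq_scale)

definition restrict_seq :: "int \<Rightarrow> int \<Rightarrow> (int \<Rightarrow> complex^'d) \<Rightarrow> int \<Rightarrow> complex^'d" where
  "restrict_seq lo hi x = (\<lambda>t. if t \<in> {lo..hi} then x t else 0)"

lemma linear_restrict_seq: "Vector_Spaces.linear seq_scale seq_scale (restrict_seq lo hi)"
  by unfold_locales (auto simp: restrict_seq_def fun_eq_iff)

lemma bbl_restrict_support:
  assumes "j \<in> {L0 - p' p..R0 - q' q}"
  shows "bbl a p q x j = bbl a p q (restrict_seq L0 R0 x) j"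
  unfolding bbl_def restrict_seq_def
  by (intro sum.cong refl) (use assms in \<open>auto simp: p'_def q'_def\<close>)

lemma linear_functional_supp_in_eq_sum:
  assumes f: "Vector_Spaces.linear seq_scale (*) f" and w: "supp_in {lo..hi} w"
  shows "f w = (\<Sum>j\<in>{lo..hi}. \<Sum>i\<in>UNIV. f (unit_seq j i) * w j $ i)"
proof -
  have "f w = f (\<Sum>j\<in>{lo..hi}. \<Sum>i\<in>UNIV. seq_scale (w j $ i) (unit_seq j i))"
    using supp_in_eq_sum_unit_seq[OF w] by simp
  then show ?thesis
    by (simp add: seq_dual.linear_sum[OF f] seq_dual.linear_scale[OF f] mult.commute)
qed

text \<open>A functional vanishing on the image but not at \<open>\<eta>\<close> would be represented by a nonzero
  annihilator of \<open>A\<close> supported in the target window.\<close>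
lemma bbl_window_surj:
  fixes a :: "int \<Rightarrow> complex^'d^'d" and \<eta> :: "int \<Rightarrow> complex^'d"
  assumes reg: "regular a p q" and \<eta>: "supp_in {L0 - p' p..R0 - q' q} \<eta>"
  shows "\<eta> \<in> bbl_window a p q (L0 - p' p) (R0 - q' q) ` {x. supp_in {L0..R0} x}"
proof (rule ccontr)
  define Lt where "Lt = L0 - p' p"
  define Rt where "Rt = R0 - q' q"
  define W where "W = bbl_window a p q Lt Rt ` {x. supp_in {L0..R0} x}"
  assume "\<eta> \<notin> bbl_window a p q (L0 - p' p) (R0 - q' q) ` {x. supp_in {L0..R0} x}"
  then have "\<eta> \<notin> W" unfolding W_def Lt_def Rt_def .
  moreover interpret T: Vector_Spaces.linear seq_scale seq_scale "bbl_window a p q Lt Rt"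
    by (rule linear_bbl_window)
  have "seq.subspace W" unfolding W_def by (rule T.subspace_image[OF subspace_supp_in])
  ultimately obtain f where f: "Vector_Spaces.linear seq_scale (*) f" "f \<eta> = 1" "\<forall>w\<in>W. f w = 0"
    by (metis seq.exists_linear_functional_separating)
  define \<xi> where "\<xi> = (\<lambda>j. if j \<in> {Lt..Rt} then (\<chi> i. f (unit_seq j i)) else (0::complex^'d))"
  have "(\<Sum>j\<in>{Lt..Rt}. \<Sum>i\<in>UNIV. \<xi> j $ i * bbl a p q x j $ i) = 0" for x
  proof -
    define y where "y = bbl_window a p q Lt Rt (restrict_seq L0 R0 x)"
    have "y \<in> W" unfolding W_def y_def by (auto simp: supp_in_def restrict_seq_def)
    then have "0 = f y" using f(3) by simp
    also have "\<dots> = (\<Sum>j\<in>{Lt..Rt}. \<Sum>i\<in>UNIV. f (unit_seq j i) * y j $ i)"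
      by (rule linear_functional_supp_in_eq_sum[OF f(1)]) (simp add: y_def bbl_window_def supp_in_def)
    also have "\<dots> = (\<Sum>j\<in>{Lt..Rt}. \<Sum>i\<in>UNIV. \<xi> j $ i * bbl a p q x j $ i)"
      using bbl_restrict_support[of _ L0 p R0 q a x]
      by (intro sum.cong refl) (simp add: \<xi>_def y_def bbl_window_def Lt_def Rt_def)
    finally show ?thesis by simp
  qed
  then have \<xi>0: "\<xi> = (\<lambda>j. 0)"
    by (intro bbl_annihilator_eq_0[OF reg]) (auto simp: \<xi>_def supp_in_def)
  have "f (unit_seq j i) = 0" if "j \<in> {Lt..Rt}" for j i
    using fun_cong[OF \<xi>0, of j] that by (simp add: \<xi>_def vec_eq_iff)
  then have "f \<eta> = 0"
    using linear_functional_supp_in_eq_sum[OF f(1) \<eta>[folded Lt_def Rt_def]] by simp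
  with f(2) show False by simp
qed

lemma tau_nonneg: "tau p q \<ge> 0"
  unfolding tau_def p'_def q'_def by simp

text \<open>Rank--nullity, done by hand since the sequence space is infinite-dimensional: extend
  \<open>X\<close> to a basis \<open>B\<close> of \<open>V(L0, R0)\<close>; by surjectivity \<open>A(B - X)\<close> spans the
  \<open>d(R0 - L0 + 1 - \<tau>)\<close>-dimensional target.\<close>
lemma card_independent_bulk_le:
  fixes a :: "int \<Rightarrow> complex^'d^'d" and X :: "(int \<Rightarrow> complex^'d) set"
  assumes reg: "regular a p q" and N: "R0 - L0 + 1 \<ge> tau p q"
    and ind: "seq.independent X" and XM: "X \<subseteq> ker_restr a p q L0 R0 (L0 - p' p) (R0 - q' q)"
  shows "finite X \<and> card X \<le> CARD('d) * nat (tau p q)"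
proof -
  define Lt where "Lt = L0 - p' p"
  define Rt where "Rt = R0 - q' q"
  define T where "T = bbl_window a p q Lt Rt"
  define V where "V = {x :: int \<Rightarrow> complex^'d. supp_in {L0..R0} x}"
  interpret T: Vector_Spaces.linear seq_scale seq_scale T
    unfolding T_def by (rule linear_bbl_window)
  have XV: "X \<subseteq> V" using XM unfolding V_def ker_restr_def by auto
  have V_span: "V \<subseteq> seq.span (unit_seqs L0 R0)"
    unfolding V_def using supp_in_imp_in_span_unit_seqs by auto
  have finX: "finite X"
    using seq.independent_span_bound[OF finite_unit_seqs ind] XV V_span by auto
  obtain B where B: "X \<subseteq> B" "B \<subseteq> V" "seq.independent B" "V \<subseteq> seq.span B"
    using seq.maximal_independent_subset_extend[OF XV ind] by metis
  have finB: "finite B" and cardB: "card B \<le> nat (R0 - L0 + 1) * CARD('d)"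
    using seq.independent_span_bound[OF finite_unit_seqs B(3)] B(2) V_span
    by (auto simp: card_unit_seqs)
  have TX: "T x = 0" if "x \<in> X" for x
    using that XM unfolding ker_restr_def T_def bbl_window_def Lt_def Rt_def by (auto simp: fun_eq_iff)
  have "T b \<in> seq.span (T ` (B - X))" if "b \<in> B" for b
    using that TX seq.span_zero seq.span_base[of "T b"] by (cases "b \<in> X") auto
  then have "T ` B \<subseteq> seq.span (T ` (B - X))" by auto
  then have span_TB: "seq.span (T ` B) \<subseteq> seq.span (T ` (B - X))"
    by (rule seq.span_minimal) simp
  have "unit_seqs Lt Rt \<subseteq> seq.span (T ` (B - X))"
  proof
    fix y :: "int \<Rightarrow> complex^'d" assume "y \<in> unit_seqs Lt Rt"
    then have "supp_in {L0 - p' p..R0 - q' q} y"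
      unfolding Lt_def Rt_def by (rule supp_in_unit_seqs)
    then have "y \<in> T ` V"
      using bbl_window_surj[OF reg] unfolding T_def V_def Lt_def Rt_def by blast
    also have "\<dots> \<subseteq> seq.span (T ` B)"
      using B(4) T.span_image by blast
    finally show "y \<in> seq.span (T ` (B - X))" using span_TB by auto
  qed
  then have "card (unit_seqs Lt Rt :: (int \<Rightarrow> complex^'d) set) \<le> card (T ` (B - X))"
    using seq.independent_span_bound[of "T ` (B - X)" "unit_seqs Lt Rt"] independent_unit_seqs finB
    by auto
  also have "\<dots> \<le> card B - card X"
    using finB B(1) finX by (metis card_Diff_subset card_image_le finite_Diff)
  finally have "nat (Rt - Lt + 1) * CARD('d) \<le> card B - card X" by (simp add: card_unit_seqs)
  moreover have "nat (R0 - L0 + 1) = nat (Rt - Lt + 1) + nat (tau p q)"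
    using N tau_nonneg[of p q] unfolding Rt_def Lt_def tau_def by linarith
  moreover have "card X \<le> card B" using B(1) finB by (simp add: card_mono)
  ultimately show ?thesis using cardB finX by (simp add: algebra_simps)
qed

lemma restrict_seq_bbl_kernel:
  assumes "x \<in> bbl_kernel a p q"
  shows "restrict_seq L0 R0 x \<in> ker_restr a p q L0 R0 (L0 - p' p) (R0 - q' q)"
  using assms bbl_restrict_support[of _ L0 p R0 q a x]
  by (auto simp: ker_restr_def supp_in_def bbl_kernel_def restrict_seq_def[of L0 R0 x])

lemma span_vanishing_on:
  assumes "\<forall>c\<in>C. \<forall>t\<in>S. c t = 0" and "x \<in> seq.span C"
  shows "\<forall>t\<in>S. x t = 0"
  using seq.span_minimal[of C "{x. \<forall>t\<in>S. x t = 0}"] assms by (auto simp: seq.subspace_def)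

lemma span_bbl_kernel: "B \<subseteq> bbl_kernel a p q \<Longrightarrow> seq.span B \<subseteq> bbl_kernel a p q"
  using seq.span_minimal subspace_bbl_kernel by blast

text \<open>An element of \<open>ker A\<close> that agrees on the window with an element of \<open>span C\<close> vanishes
  there, hence everywhere.\<close>
lemma inj_on_restrict_seq_span_kernel_Un:
  fixes a :: "int \<Rightarrow> complex^'d^'d" and p q :: int and B C :: "(int \<Rightarrow> complex^'d) set"
  defines "D \<equiv> degree (det (symbol_poly a p q))"
  assumes reg: "regular a p q" and B: "B \<subseteq> bbl_kernel a p q"
    and C: "C \<subseteq> {x. supp_in {L0..R0} x}"
    and win: "{m..m + int D} \<subseteq> {L0..R0}"
    and C_win: "\<forall>c\<in>C. \<forall>t\<in>{m..m + int D}. c t = 0"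
  shows "inj_on (restrict_seq L0 R0) (seq.span (B \<union> C))"
proof -
  define P :: "(int \<Rightarrow> complex^'d) \<Rightarrow> _" where "P = restrict_seq L0 R0"
  interpret P: Vector_Spaces.linear seq_scale seq_scale P
    unfolding P_def by (rule linear_restrict_seq)
  have "seq.span C \<subseteq> {x. supp_in {L0..R0} x}"
    by (rule seq.span_minimal[OF C subspace_supp_in])
  then have P_span_C: "P y = y" if "y \<in> seq.span C" for y
    using that by (auto simp: P_def restrict_seq_def supp_in_def fun_eq_iff)
  show ?thesis
    unfolding P_def[symmetric] P.inj_on_iff_eq_0[OF seq.subspace_span]
  proof (intro ballI impI)
    fix x assume "x \<in> seq.span (B \<union> C)" and Px: "P x = 0"
    then obtain u y where uy: "x = u + y" "u \<in> seq.span B" "y \<in> seq.span C"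
      unfolding seq.span_Un by auto
    have Pu: "P u + y = 0" using Px uy P_span_C by (simp add: P.add)
    have "u t = 0" if "t \<in> {m..m + int D}" for t
      using fun_cong[OF Pu, of t] span_vanishing_on[OF C_win uy(3)] that win
      by (auto simp: P_def restrict_seq_def)
    moreover have "bbl a p q u = (\<lambda>j. 0)"
      using span_bbl_kernel[OF B] uy(2) by (auto simp: bbl_kernel_def)
    ultimately have "u = 0"
      using bbl_kernel_vanishing_window_imp_zero[OF reg] unfolding D_def zero_fun_def by blast
    then show "x = 0" using Pu P_span_C uy by (simp add: P.zero)
  qed
qed

text \<open>Restriction to \<open>[L0, R0]\<close> embeds \<open>ker A \<oplus> span C\<close> into the bulk space.\<close>
lemma card_vanishing_bulk_plus_dim_ker_le:
  fixes a :: "int \<Rightarrow> complex^'d^'d" and p q :: int and C :: "(int \<Rightarrow> complex^'d) set"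
  defines "D \<equiv> degree (det (symbol_poly a p q))"
  assumes reg: "regular a p q" and N: "R0 - L0 + 1 \<ge> tau p q"
    and indC: "seq.independent C"
    and CM: "C \<subseteq> ker_restr a p q L0 R0 (L0 - p' p) (R0 - q' q)"
    and win: "{m..m + int D} \<subseteq> {L0..R0}"
    and C_win: "\<forall>c\<in>C. \<forall>t\<in>{m..m + int D}. c t = 0"
  shows "card C + dim_ker a p q \<le> CARD('d) * nat (tau p q)"
proof -
  define K where "K = bbl_kernel a p q"
  define P :: "(int \<Rightarrow> complex^'d) \<Rightarrow> _" where "P = restrict_seq L0 R0"
  interpret P: Vector_Spaces.linear seq_scale seq_scale P
    unfolding P_def by (rule linear_restrict_seq)
  obtain B where B: "B \<subseteq> K" "seq.independent B" "K \<subseteq> seq.span B" "card B = seq.dim K"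
    using seq.basis_exists[of K] by metis
  have C_supp: "C \<subseteq> {x. supp_in {L0..R0} x}" using CM by (auto simp: ker_restr_def)
  have disj: "x = 0" if "x \<in> seq.span B" "x \<in> seq.span C" for x
  proof -
    have "bbl a p q x = (\<lambda>j. 0)"
      using span_bbl_kernel[OF B(1)[unfolded K_def]] that(1) by (auto simp: bbl_kernel_def)
    then show ?thesis
      using bbl_kernel_vanishing_window_imp_zero[OF reg] span_vanishing_on[OF C_win that(2)]
      unfolding D_def zero_fun_def by blast
  qed
  have inj_span: "inj_on P (seq.span (B \<union> C))"
    using inj_on_restrict_seq_span_kernel_Un[OF reg _ C_supp] B(1) win C_win
    unfolding P_def K_def D_def by blast
  then have injBC: "inj_on P (B \<union> C)" by (rule inj_on_subset) (rule seq.span_superset)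
  have "P b \<in> ker_restr a p q L0 R0 (L0 - p' p) (R0 - q' q)" if "b \<in> B \<union> C" for b
  proof (cases "b \<in> C")
    case True
    then have "P b = b" using C_supp by (auto simp: P_def restrict_seq_def supp_in_def fun_eq_iff)
    then show ?thesis using True CM by auto
  next
    case False
    then show ?thesis using that B(1) unfolding P_def K_def by (auto intro: restrict_seq_bbl_kernel)
  qed
  moreover have "seq.independent (B \<union> C)"
    using B(2) indC disj by (rule seq.independent_Un_span_disjoint)
  ultimately have "finite (P ` (B \<union> C))" "card (P ` (B \<union> C)) \<le> CARD('d) * nat (tau p q)"
    using card_independent_bulk_le[OF reg N] P.independent_injective_image[OF _ inj_span] by auto
  moreover have "B \<inter> C = {}"
    using disj seq.span_base B(2) seq.dependent_zero by blast
  ultimately show ?thesis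
    using card_image[OF injBC] finite_image_iff[OF injBC] B(4)
    by (simp add: card_Un_disjoint dim_ker_def K_def)
qed

section \<open>Edge solutions\<close>

lemma independent_triangular:
  fixes c :: "nat \<Rightarrow> int \<Rightarrow> complex^'d" and pos :: "nat \<Rightarrow> int"
  assumes diag: "\<And>k. k < l \<Longrightarrow> c k (pos k) \<noteq> 0"
    and tri: "\<And>k k'. k < k' \<Longrightarrow> k' < l \<Longrightarrow> c k' (pos k) = 0"
  shows "inj_on c {0..<l} \<and> seq.independent (c ` {0..<l})"
proof
  show inj: "inj_on c {0..<l}"
  proof (rule inj_onI)
    fix k k' assume k: "k \<in> {0..<l}" and k': "k' \<in> {0..<l}" and e: "c k = c k'"
    show "k = k'"
      using diag[of k] diag[of k'] tri[of k k'] tri[of k' k] k k' e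
      by (cases k k' rule: linorder_cases) auto
  qed
  show "seq.independent (c ` {0..<l})"
  proof (rule seq.independent_if_scalars_zero)
    fix f :: "(int \<Rightarrow> complex^'d) \<Rightarrow> complex" and x
    assume s: "(\<Sum>x\<in>c ` {0..<l}. seq_scale (f x) x) = 0" and x: "x \<in> c ` {0..<l}"
    have s': "(\<Sum>k\<in>{0..<l}. seq_scale (f (c k)) (c k)) = 0"
      using s by (simp add: sum.reindex[OF inj])
    have "\<forall>k'<k. f (c k') = 0" if "k \<le> l" for k
      using that
    proof (induction k)
      case (Suc k)
      then have IH: "\<forall>k'<k. f (c k') = 0" and kl: "k < l" by auto
      have "0 = (\<Sum>k\<in>{0..<l}. seq_scale (f (c k)) (c k)) (pos k)" using s' by simp
      also have "\<dots> = (\<Sum>k'\<in>{0..<l}. if k' = k then f (c k) *s c k (pos k) else 0)"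
        unfolding sum_apply
      proof (intro sum.cong refl)
        fix k' assume "k' \<in> {0..<l}"
        then show "seq_scale (f (c k')) (c k') (pos k) = (if k' = k then f (c k) *s c k (pos k) else 0)"
          using IH tri[of k k'] by (cases k' k rule: linorder_cases) auto
      qed
      also have "\<dots> = f (c k) *s c k (pos k)" using kl by simp
      finally have "f (c k) = 0" using diag[OF kl] by simp
      then show ?case using IH less_Suc_eq by auto
    qed simp
    from this[of l] show "f x = 0" using x by auto
  qed simp
qed

lemma PT_left_power:
  assumes "supp_in {L..} \<Psi>"
  shows "(PT_left L ^^ k) \<Psi> j = (if L \<le> j then \<Psi> (j + int k) else 0)"
proof (induction k arbitrary: j)
  case 0 then show ?case using assms by (simp add: supp_in_def)
next
  case (Suc k) then show ?case by (simp add: PT_left_def add_ac)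
qed

lemma PTinv_right_power:
  assumes "supp_in {..R} \<Psi>"
  shows "(PTinv_right R ^^ k) \<Psi> j = (if j \<le> R then \<Psi> (j - int k) else 0)"
proof (induction k arbitrary: j)
  case 0 then show ?case using assms by (simp add: supp_in_def)
next
  case (Suc k) then show ?case by (simp add: PTinv_right_def algebra_simps)
qed

lemma card_plus_dim_ker_le_imp_le_sigma:
  fixes a :: "int \<Rightarrow> complex^'d^'d"
  assumes "n + dim_ker a p q \<le> CARD('d) * nat (tau p q)"
  shows "int n \<le> sigma a p q"
proof -
  have "int (n + dim_ker a p q) \<le> int (CARD('d) * nat (tau p q))"
    using assms by (simp only: of_nat_le_iff)
  also have "\<dots> = int CARD('d) * tau p q" using tau_nonneg[of p q] by simp
  finally show ?thesis unfolding sigma_def by simp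
qed

text \<open>The truncated shifts \<open>(P T)\<^sup>k \<Phi>\<close>, \<open>k \<le> m - L\<close>, are bulk solutions on
  \<open>[L, m + D + 1 + \<tau>]\<close> that vanish on the window \<open>[m + 1, m + 1 + D]\<close>.\<close>
lemma F_minus_last_nonzero_lt:
  fixes a :: "int \<Rightarrow> complex^'d^'d"
  assumes reg: "regular a p q" and F: "\<Phi> \<in> F_minus a p q L"
    and mL: "L \<le> m" and nz: "\<Phi> m \<noteq> 0" and above: "\<forall>t>m. \<Phi> t = 0"
  shows "m < L + sigma a p q"
proof -
  define l where "l = nat (m - L + 1)"
  define c where "c k = (PT_left L ^^ k) \<Phi>" for k
  define D where "D = degree (det (symbol_poly a p q))"
  define R0 where "R0 = m + int D + 1 + tau p q"
  have bulk: "\<Phi> \<in> bulk_right_inf a p q L" using F by (simp add: F_minus_def)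
  then have c_eq: "c k j = (if L \<le> j then \<Phi> (j + int k) else 0)" for k j
    unfolding c_def by (intro PT_left_power) (simp add: bulk_right_inf_def)
  have tri: "inj_on c {0..<l} \<and> seq.independent (c ` {0..<l})"
    by (rule independent_triangular[where pos = "\<lambda>k. m - int k"])
      (use nz above in \<open>auto simp: l_def c_eq\<close>)
  have "c ` {0..<l} \<subseteq> ker_restr a p q L R0 (L - p' p) (R0 - q' q)"
  proof clarify
    fix k
    have "bbl a p q (c k) j = bbl a p q \<Phi> (j + int k)" if "j \<ge> L - p' p" for j
      unfolding bbl_def c_eq using that by (intro sum.cong refl) (auto simp: p'_def add_ac)
    moreover have "bbl a p q \<Phi> j = 0" if "j \<ge> L - p' p" for j
      using bulk that by (simp add: bulk_right_inf_def)
    ultimately show "c k \<in> ker_restr a p q L R0 (L - p' p) (R0 - q' q)"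
      using above tau_nonneg[of p q] by (auto simp: ker_restr_def supp_in_def c_eq R0_def)
  qed
  then have "card (c ` {0..<l}) + dim_ker a p q \<le> CARD('d) * nat (tau p q)"
    using tri mL above tau_nonneg[of p q]
    by (intro card_vanishing_bulk_plus_dim_ker_le[OF reg, where m = "m + 1"])
      (auto simp: D_def c_eq R0_def)
  then have "int l \<le> sigma a p q"
    using tri card_image[of c "{0..<l}"] by (intro card_plus_dim_ker_le_imp_le_sigma) simp
  then show ?thesis unfolding l_def using mL by linarith
qed

lemma F_plus_first_nonzero_gt:
  fixes a :: "int \<Rightarrow> complex^'d^'d"
  assumes reg: "regular a p q" and F: "\<Phi> \<in> F_plus a p q R"
    and mR: "m \<le> R" and nz: "\<Phi> m \<noteq> 0" and below: "\<forall>t<m. \<Phi> t = 0"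
  shows "R - sigma a p q < m"
proof -
  define l where "l = nat (R - m + 1)"
  define c where "c k = (PTinv_right R ^^ k) \<Phi>" for k
  define D where "D = degree (det (symbol_poly a p q))"
  define L0 where "L0 = m - int D - 1 - tau p q"
  have bulk: "\<Phi> \<in> bulk_left_inf a p q R" using F by (simp add: F_plus_def)
  then have c_eq: "c k j = (if j \<le> R then \<Phi> (j - int k) else 0)" for k j
    unfolding c_def by (intro PTinv_right_power) (simp add: bulk_left_inf_def)
  have tri: "inj_on c {0..<l} \<and> seq.independent (c ` {0..<l})"
    by (rule independent_triangular[where pos = "\<lambda>k. m + int k"])
      (use nz below in \<open>auto simp: l_def c_eq\<close>)
  have "c ` {0..<l} \<subseteq> ker_restr a p q L0 R (L0 - p' p) (R - q' q)"
  proof clarify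
    fix k
    have "bbl a p q (c k) j = bbl a p q \<Phi> (j - int k)" if "j \<le> R - q' q" for j
      unfolding bbl_def c_eq using that by (intro sum.cong refl) (auto simp: q'_def algebra_simps)
    moreover have "bbl a p q \<Phi> j = 0" if "j \<le> R - q' q" for j
      using bulk that by (simp add: bulk_left_inf_def)
    ultimately show "c k \<in> ker_restr a p q L0 R (L0 - p' p) (R - q' q)"
      using below tau_nonneg[of p q] by (auto simp: ker_restr_def supp_in_def c_eq L0_def)
  qed
  then have "card (c ` {0..<l}) + dim_ker a p q \<le> CARD('d) * nat (tau p q)"
    using tri mR below tau_nonneg[of p q]
    by (intro card_vanishing_bulk_plus_dim_ker_le[OF reg, where m = "m - int D - 1"])
      (auto simp: D_def c_eq L0_def)
  then have "int l \<le> sigma a p q"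
    using tri card_image[of c "{0..<l}"] by (intro card_plus_dim_ker_le_imp_le_sigma) simp
  then show ?thesis unfolding l_def using mR by linarith
qed

lemma F_minus_subset_ker_restr:
  fixes a :: "int \<Rightarrow> complex^'d^'d"
  assumes reg: "regular a p q"
  defines "s \<equiv> sigma a p q"
  shows "F_minus a p q L \<subseteq> ker_restr a p q L (L + s - 1) (L - p' p) (L + s - 1 - p' p)"
proof
  fix \<Phi> assume F: "\<Phi> \<in> F_minus a p q L"
  then have bulk: "\<Phi> \<in> bulk_right_inf a p q L" by (simp add: F_minus_def)
  then have supp: "supp_in {L..} \<Phi>" by (simp add: bulk_right_inf_def)
  from F obtain K where K: "(PT_left L ^^ K) \<Phi> = (\<lambda>j. 0)" by (auto simp: F_minus_def)
  have vanish: "\<Phi> t = 0" if "t \<notin> {L..L + int K}" for t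
    using that supp fun_cong[OF K, of "t - int K"] by (auto simp: PT_left_power[OF supp] supp_in_def)
  have fin: "finite {t. \<Phi> t \<noteq> 0}"
    by (rule finite_subset[of _ "{L..L + int K}"]) (use vanish in blast, simp)
  have "\<Phi> j = 0" if "j \<notin> {L..L + s - 1}" for j
  proof (rule ccontr)
    assume nz: "\<Phi> j \<noteq> 0"
    then obtain m where m: "j \<le> m" "\<Phi> m \<noteq> 0" "\<forall>t>m. \<Phi> t = 0"
      using finite_support_last_nonzero[OF fin] by blast
    have "L \<le> j" using nz supp by (auto simp: supp_in_def)
    then have "m < L + s"
      using F_minus_last_nonzero_lt[OF reg F _ m(2,3)] m(1) unfolding s_def by simp
    then show False using that \<open>L \<le> j\<close> m(1) by simp
  qed
  then show "\<Phi> \<in> ker_restr a p q L (L + s - 1) (L - p' p) (L + s - 1 - p' p)"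
    using bulk by (simp add: ker_restr_def supp_in_def bulk_right_inf_def)
qed

lemma ker_restr_subset_F_minus:
  fixes a :: "int \<Rightarrow> complex^'d^'d" and s :: int
  shows "ker_restr a p q L (L + s - 1) (L - p' p) (L + s - 1 - p' p) \<subseteq> F_minus a p q L"
proof
  fix \<Psi> assume "\<Psi> \<in> ker_restr a p q L (L + s - 1) (L - p' p) (L + s - 1 - p' p)"
  then have supp_win: "supp_in {L..L + s - 1} \<Psi>"
    and e: "\<forall>j\<in>{L - p' p..L + s - 1 - p' p}. bbl a p q \<Psi> j = 0"
    by (auto simp: ker_restr_def)
  have supp: "supp_in {L..} \<Psi>" using supp_win by (auto simp: supp_in_def)
  have "bbl a p q \<Psi> j = 0" if "j \<ge> L - p' p" for j
  proof (cases "j \<le> L + s - 1 - p' p")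
    case False
    have "\<Psi> (j + r) = 0" if "r \<in> {p..q}" for r
    proof -
      have "L + s \<le> j + r" using False that unfolding p'_def by (simp add: min_def split: if_splits)
      then show ?thesis using supp_win unfolding supp_in_def by simp
    qed
    then show ?thesis by (simp add: bbl_def)
  qed (use e that in auto)
  moreover have "(PT_left L ^^ (nat s + 1)) \<Psi> j = 0" for j
    using supp_win unfolding PT_left_power[OF supp] by (simp add: supp_in_def)
  ultimately show "\<Psi> \<in> F_minus a p q L"
    using supp by (auto simp: F_minus_def bulk_right_inf_def intro!: exI[of _ "nat s + 1"])
qed

lemma F_plus_subset_ker_restr:
  fixes a :: "int \<Rightarrow> complex^'d^'d"
  assumes reg: "regular a p q"
  defines "s \<equiv> sigma a p q"
  shows "F_plus a p q R \<subseteq> ker_restr a p q (R - s + 1) R (R - s + 1 - q' q) (R - q' q)"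
proof
  fix \<Phi> assume F: "\<Phi> \<in> F_plus a p q R"
  then have bulk: "\<Phi> \<in> bulk_left_inf a p q R" by (simp add: F_plus_def)
  then have supp: "supp_in {..R} \<Phi>" by (simp add: bulk_left_inf_def)
  from F obtain K where K: "(PTinv_right R ^^ K) \<Phi> = (\<lambda>j. 0)" by (auto simp: F_plus_def)
  have vanish: "\<Phi> t = 0" if "t \<notin> {R - int K..R}" for t
    using that supp fun_cong[OF K, of "t + int K"] by (auto simp: PTinv_right_power[OF supp] supp_in_def)
  have fin: "finite {t. \<Phi> t \<noteq> 0}"
    by (rule finite_subset[of _ "{R - int K..R}"]) (use vanish in blast, simp)
  have "\<Phi> j = 0" if "j \<notin> {R - s + 1..R}" for j
  proof (rule ccontr)
    assume nz: "\<Phi> j \<noteq> 0"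
    then obtain m where m: "m \<le> j" "\<Phi> m \<noteq> 0" "\<forall>t<m. \<Phi> t = 0"
      using finite_support_first_nonzero[OF fin] by blast
    have "j \<le> R" using nz supp by (auto simp: supp_in_def)
    then have "R - s < m"
      using F_plus_first_nonzero_gt[OF reg F _ m(2,3)] m(1) unfolding s_def by simp
    then show False using that \<open>j \<le> R\<close> m(1) by simp
  qed
  then show "\<Phi> \<in> ker_restr a p q (R - s + 1) R (R - s + 1 - q' q) (R - q' q)"
    using bulk by (simp add: ker_restr_def supp_in_def bulk_left_inf_def)
qed

lemma ker_restr_subset_F_plus:
  fixes a :: "int \<Rightarrow> complex^'d^'d" and s :: int
  shows "ker_restr a p q (R - s + 1) R (R - s + 1 - q' q) (R - q' q) \<subseteq> F_plus a p q R"
proof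
  fix \<Psi> assume "\<Psi> \<in> ker_restr a p q (R - s + 1) R (R - s + 1 - q' q) (R - q' q)"
  then have supp_win: "supp_in {R - s + 1..R} \<Psi>"
    and e: "\<forall>j\<in>{R - s + 1 - q' q..R - q' q}. bbl a p q \<Psi> j = 0"
    by (auto simp: ker_restr_def)
  have supp: "supp_in {..R} \<Psi>" using supp_win by (auto simp: supp_in_def)
  have "bbl a p q \<Psi> j = 0" if "j \<le> R - q' q" for j
  proof (cases "j \<ge> R - s + 1 - q' q")
    case False
    have "\<Psi> (j + r) = 0" if "r \<in> {p..q}" for r
    proof -
      have "j + r \<le> R - s" using False that unfolding q'_def by (simp add: max_def split: if_splits)
      then show ?thesis using supp_win unfolding supp_in_def by simp
    qed
    then show ?thesis by (simp add: bbl_def)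
  qed (use e that in auto)
  moreover have "(PTinv_right R ^^ (nat s + 1)) \<Psi> j = 0" for j
    using supp_win unfolding PTinv_right_power[OF supp] by (simp add: supp_in_def)
  ultimately show "\<Psi> \<in> F_plus a p q R"
    using supp by (auto simp: F_plus_def bulk_left_inf_def intro!: exI[of _ "nat s + 1"])
qed

theorem mainTheorem12:
  fixes a :: "int \<Rightarrow> complex^'d^'d" and p q L R :: int
  assumes "is_bandwidth a p q"
    and "regular a p q"
    and "R - L + 1 \<ge> tau p q + 2 * sigma a p q"
  shows "F_minus a p q L
           = ker_restr a p q L (L + sigma a p q - 1) (L - p' p) (L + sigma a p q - 1 - p' p)
       \<and> F_plus a p q R
           = ker_restr a p q (R - sigma a p q + 1) R (R - sigma a p q + 1 - q' q) (R - q' q)"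
  using F_minus_subset_ker_restr[OF assms(2)] ker_restr_subset_F_minus
    F_plus_subset_ker_restr[OF assms(2)] ker_restr_subset_F_plus
  by (intro conjI equalityI)

end
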